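(* Let $W,V$ be B-DMCs, $N=2^n$, $i\in\{1,\dots,N\}$, and let $y_1^{2N}$ be distributed according to $W(y_1^{2N}|0_1^{2N})=W(y_1^N|0_1^N)W(y_{N+1}^{2N}|0_1^N)$. Write $L_1=L_{V_N^{(i)}}(y_1^N)$. For $j\in\{2i-1,2i\}$ and $\bowtie\in\{\ge,\le\}$ define, for $b\in\{0,1\}$, $g^{\bowtie}_j(b)=\mathbb E_W\big[\mathbf 1\{L_{V_{2N}^{(j)}}(y_1^{2N})\bowtie1\}\,\big|\,\mathbf 1\{L_1\bowtie1\}=b\big]$ (whenever the conditioning event has positive probability). Then: (a) $g^{\ge}_{2i}(1)\ge g^{\ge}_{2i}(0)$ and $g^{\le}_{2i}(1)\ge g^{\le}_{2i}(0)$; (b) if $\mathbb P_W[L_{V_N^{(i)}}(y_1^N)\le1]\ge\mathbb P_W[L_{V_N^{(i)}}(y_1^N)\ge1]$, then $g^{\ge}_{2i-1}(1)\ge g^{\ge}_{2i-1}(0)$ and $g^{\le}_{2i-1}(1)\ge g^{\le}_{2i-1}(0)$.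
   Context: A B-DMC $W:\{0,1\}\to\mathcal Y$ is given by transition probabilities $W(y|x)$, $\mathcal Y$ finite; $L_W(y)=W(y|1)/W(y|0)$. For a B-DMC $W$: $W^-(y_1y_2|u_1)=\sum_{u_2}\tfrac12W(y_1|u_1\oplus u_2)W(y_2|u_2)$, $W^+(y_1y_2u_1|u_2)=\tfrac12W(y_1|u_1\oplus u_2)W(y_2|u_2)$. Synthetic channels: $W_1^{(1)}=W$, $W_{2N}^{(2i-1)}=(W_N^{(i)})^-$, $W_{2N}^{(2i)}=(W_N^{(i)})^+$; an output of $V_N^{(i)}$ is written $(y_1^N,u_1^{i-1})$ as in Arıkan's construction and $L_{V_N^{(i)}}(y_1^N):=L_{V_N^{(i)}}(y_1^N,0_1^{i-1})$. With $L_1=L_{V_N^{(i)}}(y_1^N)$, $L_2=L_{V_N^{(i)}}(y_{N+1}^{2N})$: $L_{V_{2N}^{(2i-1)}}(y_1^{2N})=\frac{L_1+L_2}{1+L_1L_2}$, $L_{V_{2N}^{(2i)}}(y_1^{2N})=L_1L_2$. Notation: $W(y_1^N|0_1^N)=\prod_jW(y_j|0)$, $\mathbb P_W[E]=\sum_{y_1^N}W(y_1^N|0_1^N)\mathbf 1\{E\}$. *)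

theory Defs
  imports Complex_Main "HOL-Library.Extended_Real"
begin

text \<open>Binary-input DMC with finite output alphabet 'y; the input alphabet {0,1}
  is encoded by bool (False = 0, True = 1).  W y x stands for W(y|x).\<close>
definition bdmc :: "('y::finite \<Rightarrow> bool \<Rightarrow> real) \<Rightarrow> bool" where
  "bdmc W \<longleftrightarrow> (\<forall>y x. 0 \<le> W y x) \<and> (\<forall>x. (\<Sum>y\<in>UNIV. W y x) = 1)"

text \<open>Universal output alphabet for synthetic channels: Leaf y is an output of W,
  MinusOut a b is an output (a,b) of C^-, PlusOut a b u1 is an output (a,b,u1) of C^+.\<close>
datatype 'y chout = Leaf 'y | MinusOut "'y chout" "'y chout" | PlusOut "'y chout" "'y chout" bool

fun lift_ch :: "('y \<Rightarrow> bool \<Rightarrow> real) \<Rightarrow> 'y chout \<Rightarrow> bool \<Rightarrow> real" where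
  "lift_ch W (Leaf y) x = W y x"
| "lift_ch W _ _ = 0"

fun minus_ch :: "('y chout \<Rightarrow> bool \<Rightarrow> real) \<Rightarrow> 'y chout \<Rightarrow> bool \<Rightarrow> real" where
  "minus_ch C (MinusOut a b) u1 = (\<Sum>u2\<in>(UNIV::bool set). 1/2 * C a (u1 \<noteq> u2) * C b u2)"
| "minus_ch C _ _ = 0"

fun plus_ch :: "('y chout \<Rightarrow> bool \<Rightarrow> real) \<Rightarrow> 'y chout \<Rightarrow> bool \<Rightarrow> real" where
  "plus_ch C (PlusOut a b u1) u2 = 1/2 * C a (u1 \<noteq> u2) * C b u2"
| "plus_ch C _ _ = 0"

text \<open>synth W n i = W_N^{(i)} with N = 2^n, 1 \<le> i \<le> N:
  W_1^{(1)} = W, W_{2N}^{(2i-1)} = (W_N^{(i)})^-, W_{2N}^{(2i)} = (W_N^{(i)})^+.\<close>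
fun synth :: "('y \<Rightarrow> bool \<Rightarrow> real) \<Rightarrow> nat \<Rightarrow> nat \<Rightarrow> 'y chout \<Rightarrow> bool \<Rightarrow> real" where
  "synth W 0 i = lift_ch W"
| "synth W (Suc n) j = (if even j then plus_ch else minus_ch) (synth W n ((j + 1) div 2))"

text \<open>zero_out n i ys is the output (y_1^N, 0_1^{i-1}) of W_N^{(i)} (ys of length N = 2^n),
  following Arikan's identification of outputs.\<close>
fun zero_out :: "nat \<Rightarrow> nat \<Rightarrow> 'y list \<Rightarrow> 'y chout" where
  "zero_out 0 i ys = Leaf (hd ys)"
| "zero_out (Suc n) j ys =
     (let i = (j + 1) div 2;
          a = zero_out n i (take (2^n) ys);
          b = zero_out n i (drop (2^n) ys)
      in if even j then PlusOut a b False else MinusOut a b)"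

text \<open>Likelihood ratio C(o|1)/C(o|0) in [0,\<infinity>]; convention c/0 = \<infinity> for c > 0, 0/0 = 1.\<close>
definition lr :: "('y chout \<Rightarrow> bool \<Rightarrow> real) \<Rightarrow> 'y chout \<Rightarrow> ereal" where
  "lr C z = (if C z False = 0 then (if C z True = 0 then 1 else \<infinity>)
             else ereal (C z True / C z False))"

definition synth_lr :: "('y \<Rightarrow> bool \<Rightarrow> real) \<Rightarrow> nat \<Rightarrow> nat \<Rightarrow> 'y list \<Rightarrow> ereal" where
  "synth_lr V n i ys = lr (synth V n i) (zero_out n i ys)"

definition probW :: "('y::finite \<Rightarrow> bool \<Rightarrow> real) \<Rightarrow> nat \<Rightarrow> ('y list \<Rightarrow> bool) \<Rightarrow> real" where
  "probW W m E = (\<Sum>ys\<in>{ys. length ys = m}.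
      if E ys then prod_list (map (\<lambda>y. W y False) ys) else 0)"

definition cond_event :: "('y \<Rightarrow> bool \<Rightarrow> real) \<Rightarrow> nat \<Rightarrow> nat \<Rightarrow> (ereal \<Rightarrow> ereal \<Rightarrow> bool)
    \<Rightarrow> bool \<Rightarrow> 'y list \<Rightarrow> bool" where
  "cond_event V n i R b ys \<longleftrightarrow> (R (synth_lr V n i (take (2^n) ys)) 1 = b)"

definition gcond :: "('y::finite \<Rightarrow> bool \<Rightarrow> real) \<Rightarrow> ('y \<Rightarrow> bool \<Rightarrow> real) \<Rightarrow> nat \<Rightarrow> nat \<Rightarrow> nat
    \<Rightarrow> (ereal \<Rightarrow> ereal \<Rightarrow> bool) \<Rightarrow> bool \<Rightarrow> real" where
  "gcond W V n i j R b =
     probW W (2 * 2^n) (\<lambda>ys. R (synth_lr V (Suc n) j ys) 1 \<and> cond_event V n i R b ys)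
     / probW W (2 * 2^n) (cond_event V n i R b)"

end

theory Submission
  imports Defs
begin

text \<open>Split y_1^{2N} into independent halves x and z, and let a_u, b_u be the likelihoods of
  x and z under V_N^{(i)}.  For the plus channel L \<ge> 1 iff a_0 b_0 \<le> a_1 b_1, for the minus channel
  iff (a_1 - a_0)(b_0 - b_1) \<ge> 0.  In all four cases there are events G, H on z such that
  "condition on x holds and G" forces the event, while "condition fails and the event" forces H,
  and P[H] \<le> P[G] (for the minus channel this is exactly the hypothesis of (b)).  By independence
  the conditional probability given the condition fails is then at most P[H] \<le> P[G], which is at
  most the conditional probability given it holds.\<close>

lemma sum_product_filter:
  fixes p :: "'a \<Rightarrow> 'b::comm_semiring_0"
  shows "(\<Sum>(x, z) \<in> {(x, z) \<in> S \<times> T. c x \<and> d z}. p x * p z)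
         = sum p {x \<in> S. c x} * sum p {z \<in> T. d z}"
proof -
  have "{(x, z) \<in> S \<times> T. c x \<and> d z} = {x \<in> S. c x} \<times> {z \<in> T. d z}"
    by auto
  then show ?thesis
    by (simp add: sum_product sum.cartesian_product)
qed

lemma conditional_prob_product_mono:
  fixes p :: "'a \<Rightarrow> real" and S :: "'a set"
  defines "P \<equiv> \<lambda>E. \<Sum>(x, z) \<in> {(x, z) \<in> S \<times> S. E x z}. p x * p z"
  assumes "finite S" and p_nonneg: "\<And>x. x \<in> S \<Longrightarrow> 0 \<le> p x"
    and if_c: "\<And>x z. x \<in> S \<Longrightarrow> z \<in> S \<Longrightarrow> c x \<Longrightarrow> G z \<Longrightarrow> F x z"
    and if_not_c: "\<And>x z. x \<in> S \<Longrightarrow> z \<in> S \<Longrightarrow> \<not> c x \<Longrightarrow> F x z \<Longrightarrow> H z"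
    and H_le_G: "sum p {z \<in> S. H z} \<le> sum p {z \<in> S. G z}"
    and pos_c: "P (\<lambda>x z. c x) > 0" and pos_not_c: "P (\<lambda>x z. \<not> c x) > 0"
  shows "P (\<lambda>x z. F x z \<and> \<not> c x) / P (\<lambda>x z. \<not> c x) \<le> P (\<lambda>x z. F x z \<and> c x) / P (\<lambda>x z. c x)"
proof -
  have P_factor: "P (\<lambda>x z. a x \<and> b z) = sum p {x \<in> S. a x} * sum p {z \<in> S. b z}" for a b
    unfolding P_def by (rule sum_product_filter)
  have P_mono: "P E \<le> P E'" if "\<And>x z. x \<in> S \<Longrightarrow> z \<in> S \<Longrightarrow> E x z \<Longrightarrow> E' x z" for E E'
  proof -
    have "finite {(x, z) \<in> S \<times> S. E' x z}"
      using \<open>finite S\<close> by (auto intro: finite_subset[of _ "S \<times> S"])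
    then show ?thesis
      unfolding P_def using that p_nonneg by (intro sum_mono2) auto
  qed
  define T where "T = sum p S"
  define Pc where "Pc = sum p {x \<in> S. c x}"
  define Pn where "Pn = sum p {x \<in> S. \<not> c x}"
  have P_c: "P (\<lambda>x z. c x) = Pc * T" and P_not_c: "P (\<lambda>x z. \<not> c x) = Pn * T"
    using P_factor[of c "\<lambda>_. True"] P_factor[of "\<lambda>x. \<not> c x" "\<lambda>_. True"]
    by (simp_all add: Pc_def Pn_def T_def)
  have "0 \<le> Pc" "0 \<le> Pn"
    unfolding Pc_def Pn_def using p_nonneg by (auto intro: sum_nonneg)
  with pos_c pos_not_c P_c P_not_c have "0 < T" "0 < Pc" "0 < Pn"
    by (auto simp: zero_less_mult_iff)
  have "P (\<lambda>x z. F x z \<and> \<not> c x) \<le> Pn * sum p {z \<in> S. H z}"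
    using P_mono[of "\<lambda>x z. F x z \<and> \<not> c x" "\<lambda>x z. \<not> c x \<and> H z"] if_not_c
    by (auto simp: P_factor Pn_def)
  then have "P (\<lambda>x z. F x z \<and> \<not> c x) / P (\<lambda>x z. \<not> c x) \<le> sum p {z \<in> S. H z} / T"
    using \<open>0 < T\<close> \<open>0 < Pn\<close> by (simp add: P_not_c divide_simps mult.commute)
  also have "\<dots> \<le> sum p {z \<in> S. G z} / T"
    using H_le_G \<open>0 < T\<close> by (simp add: divide_right_mono)
  also have "\<dots> \<le> P (\<lambda>x z. F x z \<and> c x) / P (\<lambda>x z. c x)"
  proof -
    have "Pc * sum p {z \<in> S. G z} \<le> P (\<lambda>x z. F x z \<and> c x)"
      using P_mono[of "\<lambda>x z. c x \<and> G z" "\<lambda>x z. F x z \<and> c x"] if_c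
      by (auto simp: P_factor Pc_def)
    then show ?thesis
      using \<open>0 < T\<close> \<open>0 < Pc\<close> by (simp add: P_c divide_simps mult.commute)
  qed
  finally show ?thesis .
qed

definition prob_given_zeros :: "('y \<Rightarrow> bool \<Rightarrow> real) \<Rightarrow> 'y list \<Rightarrow> real" where
  "prob_given_zeros W ys = prod_list (map (\<lambda>y. W y False) ys)"

lemma prob_given_zeros_nonneg: "bdmc W \<Longrightarrow> 0 \<le> prob_given_zeros W ys"
  by (auto simp: prob_given_zeros_def bdmc_def intro!: prod_list_nonneg)

lemma probW_eq_sum:
  fixes W :: "'y::finite \<Rightarrow> bool \<Rightarrow> real"
  shows "probW W m E = sum (prob_given_zeros W) {ys. length ys = m \<and> E ys}"
proof -
  have "{ys. length ys = m \<and> E ys} = {ys. length ys = m} \<inter> {ys. E ys}"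
    by auto
  then show ?thesis
    by (simp add: probW_def prob_given_zeros_def sum.inter_restrict[OF finite_list_length])
qed

lemma probW_append:
  fixes W :: "'y::finite \<Rightarrow> bool \<Rightarrow> real"
  shows "probW W (m + m) E
   = (\<Sum>(xs, zs) \<in> {(xs, zs) \<in> {ys. length ys = m} \<times> {ys. length ys = m}. E (xs @ zs)}.
        prob_given_zeros W xs * prob_given_zeros W zs)"
proof -
  let ?S = "{ys :: 'y list. length ys = m}"
  have "bij_betw (\<lambda>(xs, zs). xs @ zs) {(xs, zs) \<in> ?S \<times> ?S. E (xs @ zs)} {ys. length ys = m + m \<and> E ys}"
    by (rule bij_betw_byWitness[where f' = "\<lambda>ys. (take m ys, drop m ys)"]) auto
  then show ?thesis
    unfolding probW_eq_sum
    by (subst sum.reindex_bij_betw[symmetric]) (auto simp: prob_given_zeros_def split_beta)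
qed

lemma gcond_mono:
  fixes W V :: "'y::finite \<Rightarrow> bool \<Rightarrow> real"
  assumes "bdmc W"
    and "probW W (2 * 2^n) (cond_event V n i R True) > 0"
    and "probW W (2 * 2^n) (cond_event V n i R False) > 0"
    and "\<And>xs zs. length xs = 2^n \<Longrightarrow> length zs = 2^n \<Longrightarrow>
           R (synth_lr V n i xs) 1 \<Longrightarrow> G zs \<Longrightarrow> R (synth_lr V (Suc n) j (xs @ zs)) 1"
    and "\<And>xs zs. length xs = 2^n \<Longrightarrow> length zs = 2^n \<Longrightarrow>
           \<not> R (synth_lr V n i xs) 1 \<Longrightarrow> R (synth_lr V (Suc n) j (xs @ zs)) 1 \<Longrightarrow> H zs"
    and "probW W (2^n) H \<le> probW W (2^n) G"
  shows "gcond W V n i j R False \<le> gcond W V n i j R True"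
proof -
  let ?S = "{ys :: 'y list. length ys = 2^n}"
  let ?P = "\<lambda>E. \<Sum>(xs, zs) \<in> {(xs, zs) \<in> ?S \<times> ?S. E xs zs}.
              prob_given_zeros W xs * prob_given_zeros W zs"
  let ?L = "\<lambda>xs. synth_lr V n i xs"
  have cond_prob: "probW W (2 * 2^n) (\<lambda>ys. E ys \<and> cond_event V n i R b ys)
      = ?P (\<lambda>xs zs. E (xs @ zs) \<and> (R (?L xs) 1 = b))" for E b
    unfolding mult_2 probW_append by (intro sum.cong) (auto simp: cond_event_def)
  have cond_total: "probW W (2 * 2^n) (cond_event V n i R b) = ?P (\<lambda>xs zs. R (?L xs) 1 = b)" for b
    using cond_prob[of "\<lambda>_. True" b] by simp
  have "?P (\<lambda>xs zs. R (synth_lr V (Suc n) j (xs @ zs)) 1 \<and> \<not> R (?L xs) 1) / ?P (\<lambda>xs zs. \<not> R (?L xs) 1)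
      \<le> ?P (\<lambda>xs zs. R (synth_lr V (Suc n) j (xs @ zs)) 1 \<and> R (?L xs) 1) / ?P (\<lambda>xs zs. R (?L xs) 1)"
  proof (rule conditional_prob_product_mono[where G = G and H = H])
    show "sum (prob_given_zeros W) {zs \<in> ?S. H zs} \<le> sum (prob_given_zeros W) {zs \<in> ?S. G zs}"
      using assms(6) by (simp add: probW_eq_sum)
    show "?P (\<lambda>xs zs. R (?L xs) 1) > 0" "?P (\<lambda>xs zs. \<not> R (?L xs) 1) > 0"
      using assms(2,3) by (simp_all add: cond_total)
  qed (use assms(1,4,5) prob_given_zeros_nonneg finite_list_length in auto)
  then show ?thesis
    by (simp add: gcond_def cond_prob cond_total)
qed

definition synth_lik :: "('y \<Rightarrow> bool \<Rightarrow> real) \<Rightarrow> nat \<Rightarrow> nat \<Rightarrow> 'y list \<Rightarrow> bool \<Rightarrow> real" where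
  "synth_lik V n i ys b = synth V n i (zero_out n i ys) b"

lemma synth_nonneg: "bdmc V \<Longrightarrow> 0 \<le> synth V n i z x"
proof (induction n arbitrary: i z x)
  case 0
  then show ?case by (cases z) (auto simp: bdmc_def)
next
  case (Suc n)
  then show ?case
    by (cases z) (auto intro!: sum_nonneg mult_nonneg_nonneg)
qed

lemma synth_lik_nonneg: "bdmc V \<Longrightarrow> 0 \<le> synth_lik V n i ys b"
  by (simp add: synth_lik_def synth_nonneg)

lemma one_le_lr_iff: "0 \<le> C z False \<Longrightarrow> 0 \<le> C z True \<Longrightarrow> 1 \<le> lr C z \<longleftrightarrow> C z False \<le> C z True"
  by (auto simp: lr_def divide_simps)

lemma lr_le_one_iff: "0 \<le> C z False \<Longrightarrow> 0 \<le> C z True \<Longrightarrow> lr C z \<le> 1 \<longleftrightarrow> C z True \<le> C z False"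
  by (auto simp: lr_def divide_simps)

lemma one_le_synth_lr_iff:
  "bdmc V \<Longrightarrow> 1 \<le> synth_lr V n i ys \<longleftrightarrow> synth_lik V n i ys False \<le> synth_lik V n i ys True"
  unfolding synth_lr_def synth_lik_def by (rule one_le_lr_iff) (simp_all add: synth_nonneg)

lemma synth_lr_le_one_iff:
  "bdmc V \<Longrightarrow> synth_lr V n i ys \<le> 1 \<longleftrightarrow> synth_lik V n i ys True \<le> synth_lik V n i ys False"
  unfolding synth_lr_def synth_lik_def by (rule lr_le_one_iff) (simp_all add: synth_nonneg)

lemma synth_lik_even:
  "length xs = 2^n \<Longrightarrow>
   synth_lik V (Suc n) (2 * i) (xs @ zs) b = synth_lik V n i xs b * synth_lik V n i zs b / 2"
  by (simp add: synth_lik_def Let_def)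

lemma synth_lik_odd:
  assumes "1 \<le> i" and "length xs = 2^n"
  shows "synth_lik V (Suc n) (2 * i - 1) (xs @ zs) b
       = (synth_lik V n i xs b * synth_lik V n i zs False
          + synth_lik V n i xs (\<not> b) * synth_lik V n i zs True) / 2"
proof -
  have "\<not> even (2 * i - 1)" and "(2 * i - 1 + 1) div 2 = i"
    using assms(1) by presburger+
  then show ?thesis
    using assms(2) by (simp add: synth_lik_def Let_def UNIV_bool add_divide_distrib)
qed

lemma one_le_synth_lr_even_iff:
  assumes "bdmc V" and "length xs = 2^n"
  shows "1 \<le> synth_lr V (Suc n) (2 * i) (xs @ zs)
     \<longleftrightarrow> synth_lik V n i xs False * synth_lik V n i zs False \<le> synth_lik V n i xs True * synth_lik V n i zs True"
  using assms by (simp add: one_le_synth_lr_iff synth_lik_even)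

lemma synth_lr_even_le_one_iff:
  assumes "bdmc V" and "length xs = 2^n"
  shows "synth_lr V (Suc n) (2 * i) (xs @ zs) \<le> 1
     \<longleftrightarrow> synth_lik V n i xs True * synth_lik V n i zs True \<le> synth_lik V n i xs False * synth_lik V n i zs False"
  using assms by (simp add: synth_lr_le_one_iff synth_lik_even)

lemma synth_lik_odd_diff:
  assumes "1 \<le> i" and "length xs = 2^n"
  shows "synth_lik V (Suc n) (2 * i - 1) (xs @ zs) True - synth_lik V (Suc n) (2 * i - 1) (xs @ zs) False
     = (synth_lik V n i xs True - synth_lik V n i xs False) * (synth_lik V n i zs False - synth_lik V n i zs True) / 2"
  unfolding synth_lik_odd[OF assms] by (simp add: field_simps)

lemma one_le_synth_lr_odd_iff:
  assumes "bdmc V" and "1 \<le> i" and "length xs = 2^n"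
  shows "1 \<le> synth_lr V (Suc n) (2 * i - 1) (xs @ zs)
     \<longleftrightarrow> 0 \<le> (synth_lik V n i xs True - synth_lik V n i xs False) * (synth_lik V n i zs False - synth_lik V n i zs True)"
  using synth_lik_odd_diff[OF assms(2,3), where V = V and zs = zs]
    one_le_synth_lr_iff[OF assms(1), of "Suc n" "2 * i - 1" "xs @ zs"]
  by linarith

lemma synth_lr_odd_le_one_iff:
  assumes "bdmc V" and "1 \<le> i" and "length xs = 2^n"
  shows "synth_lr V (Suc n) (2 * i - 1) (xs @ zs) \<le> 1
     \<longleftrightarrow> (synth_lik V n i xs True - synth_lik V n i xs False) * (synth_lik V n i zs False - synth_lik V n i zs True) \<le> 0"
  using synth_lik_odd_diff[OF assms(2,3), where V = V and zs = zs]
    synth_lr_le_one_iff[OF assms(1), of "Suc n" "2 * i - 1" "xs @ zs"]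
  by linarith

lemma le_of_mult_le_mult:
  fixes a a' b b' :: "'a::linordered_semiring_strict"
  assumes "0 \<le> a" and "0 \<le> b" and "a < a'" and "a' * b' \<le> a * b"
  shows "b' \<le> b"
proof (rule ccontr)
  assume "\<not> b' \<le> b"
  then have "a * b < a' * b'"
    using assms(1-3) by (intro mult_strict_mono) auto
  with assms(4) show False
    by simp
qed

lemma gcond_even_mono:
  fixes W V :: "'y::finite \<Rightarrow> bool \<Rightarrow> real"
  assumes "bdmc W" and "bdmc V" and "R \<in> {(\<ge>), (\<le>)}"
    and "probW W (2 * 2^n) (cond_event V n i R True) > 0"
    and "probW W (2 * 2^n) (cond_event V n i R False) > 0"
  shows "gcond W V n i (2 * i) R False \<le> gcond W V n i (2 * i) R True"
proof -
  note nonneg = synth_lik_nonneg[OF assms(2)]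
  from assms(3) consider "R = (\<ge>)" | "R = (\<le>)"
    by blast
  then show ?thesis
  proof cases
    case 1
    show ?thesis
      by (rule gcond_mono[where G = "\<lambda>zs. 1 \<le> synth_lr V n i zs" and H = "\<lambda>zs. 1 \<le> synth_lr V n i zs"])
        (use assms 1 in \<open>auto simp: one_le_synth_lr_even_iff one_le_synth_lr_iff[OF assms(2), of n i]
           not_le nonneg intro: mult_mono le_of_mult_le_mult[OF nonneg nonneg]\<close>)
  next
    case 2
    show ?thesis
      by (rule gcond_mono[where G = "\<lambda>zs. synth_lr V n i zs \<le> 1" and H = "\<lambda>zs. synth_lr V n i zs \<le> 1"])
        (use assms 2 in \<open>auto simp: synth_lr_even_le_one_iff synth_lr_le_one_iff[OF assms(2), of n i]
           not_le nonneg intro: mult_mono le_of_mult_le_mult[OF nonneg nonneg]\<close>)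
  qed
qed

lemma gcond_odd_mono:
  fixes W V :: "'y::finite \<Rightarrow> bool \<Rightarrow> real"
  assumes "bdmc W" and "bdmc V" and "1 \<le> i" and "R \<in> {(\<ge>), (\<le>)}"
    and "probW W (2^n) (\<lambda>ys. synth_lr V n i ys \<ge> 1) \<le> probW W (2^n) (\<lambda>ys. synth_lr V n i ys \<le> 1)"
    and "probW W (2 * 2^n) (cond_event V n i R True) > 0"
    and "probW W (2 * 2^n) (cond_event V n i R False) > 0"
  shows "gcond W V n i (2 * i - 1) R False \<le> gcond W V n i (2 * i - 1) R True"
proof (rule gcond_mono[where G = "\<lambda>zs. synth_lr V n i zs \<le> 1" and H = "\<lambda>zs. 1 \<le> synth_lr V n i zs"])
  have R_cases: "R = (\<ge>) \<or> R = (\<le>)"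
    using assms(4) by blast
  \<comment> \<open>\<open>One_nat_def\<close>: the simplifier turns \<open>2 * i - 1\<close> in the goals into \<open>2 * i - Suc 0\<close>.\<close>
  note iffs = one_le_synth_lr_odd_iff[OF assms(2,3), unfolded One_nat_def]
    synth_lr_odd_le_one_iff[OF assms(2,3), unfolded One_nat_def]
    one_le_synth_lr_iff[OF assms(2), of n i] synth_lr_le_one_iff[OF assms(2), of n i]
  show "R (synth_lr V (Suc n) (2 * i - 1) (xs @ zs)) 1"
    if "length xs = 2^n" and "R (synth_lr V n i xs) 1" and "synth_lr V n i zs \<le> 1" for xs zs
    using R_cases that by (auto simp: iffs zero_le_mult_iff mult_le_0_iff)
  show "1 \<le> synth_lr V n i zs"
    if "length xs = 2^n" and "\<not> R (synth_lr V n i xs) 1" and "R (synth_lr V (Suc n) (2 * i - 1) (xs @ zs)) 1" for xs zs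
    using R_cases that by (auto simp: iffs zero_le_mult_iff mult_le_0_iff)
qed (use assms in simp_all)

theorem proposition6:
  fixes W V :: "'y::finite \<Rightarrow> bool \<Rightarrow> real" and n i :: nat
  assumes "bdmc W" and "bdmc V" and "1 \<le> i" and "i \<le> 2^n"
  shows "(\<forall>R \<in> {(\<ge>), (\<le>)}.
            probW W (2 * 2^n) (cond_event V n i R True) > 0 \<and>
            probW W (2 * 2^n) (cond_event V n i R False) > 0 \<longrightarrow>
            gcond W V n i (2 * i) R True \<ge> gcond W V n i (2 * i) R False)
       \<and> (probW W (2^n) (\<lambda>ys. synth_lr V n i ys \<le> 1) \<ge> probW W (2^n) (\<lambda>ys. synth_lr V n i ys \<ge> 1)
          \<longrightarrow> (\<forall>R \<in> {(\<ge>), (\<le>)}.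
            probW W (2 * 2^n) (cond_event V n i R True) > 0 \<and>
            probW W (2 * 2^n) (cond_event V n i R False) > 0 \<longrightarrow>
            gcond W V n i (2 * i - 1) R True \<ge> gcond W V n i (2 * i - 1) R False))"
  using gcond_even_mono[OF assms(1,2)] gcond_odd_mono[OF assms(1-3)] by blast

end
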